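(* Let $K\subset\mathbb{R}^d$ be a convex body (not necessarily centrally symmetric). Let $\mathcal{K}=\{o_i+\tau_iK: i=1,\dots,n\}$ with $o_i\in\mathbb{R}^d$ and $\tau_1,\dots,\tau_n>0$ be a non-separable family of positive homothetic copies of $K$. Then there is a translate of $\frac{d+1}{2}\left(\sum_{i=1}^n\tau_i\right)K$ that covers $\bigcup\mathcal{K}$.
   Context: A convex body is a compact convex set with nonempty interior. A family $\mathcal{K}$ of convex bodies in $\mathbb{R}^d$ is called non-separable if every hyperplane $H$ that intersects $\operatorname{conv}\bigcup\mathcal{K}$ intersects some member of $\mathcal{K}$. *)

theory Defs
  imports "HOL-Analysis.Analysis"
begin

definition convex_body :: "'a::euclidean_space set \<Rightarrow> bool" where
  "convex_body K \<longleftrightarrow> compact K \<and> convex K \<and> interior K \<noteq> {}"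

definition hyperplane :: "'a::euclidean_space set \<Rightarrow> bool" where
  "hyperplane H \<longleftrightarrow> (\<exists>a b. a \<noteq> 0 \<and> H = {x. a \<bullet> x = b})"

definition non_separable :: "'a::euclidean_space set set \<Rightarrow> bool" where
  "non_separable \<K> \<longleftrightarrow>
     (\<forall>H. hyperplane H \<and> H \<inter> convex hull (\<Union>\<K>) \<noteq> {} \<longrightarrow> (\<exists>C\<in>\<K>. H \<inter> C \<noteq> {}))"

definition homothet :: "'a::real_vector \<Rightarrow> real \<Rightarrow> 'a set \<Rightarrow> 'a set" where
  "homothet o' \<tau> K = (\<lambda>x. o' + \<tau> *\<^sub>R x) ` K"

end

theory Submission
  imports Defs
begin

text \<open>Fix a direction \<open>u\<close>. By non-separability the projections of the copies onto \<open>u\<close>,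
  intervals with lengths proportional to the \<open>\<tau>\<^sub>i\<close>, cover the projection of the convex
  hull of the union without gaps. Peeling off the interval with the lowest right endpoint gives
  \<open>\<Sum>\<^sub>i \<tau>\<^sub>i (M - b\<^sub>i) \<le> w ((\<Sum>\<^sub>i \<tau>\<^sub>i)\<^sup>2 - \<Sum>\<^sub>i \<tau>\<^sub>i\<^sup>2)\<close>, where \<open>b\<^sub>i\<close> are
  the right endpoints, \<open>M\<close> their maximum and \<open>w\<close> the half-width of \<open>K\<close> in direction \<open>u\<close>.
  This bounds the support value of the union by that of the \<open>\<tau>\<close>-weighted mean of the \<open>o\<^sub>i\<close>
  plus terms in the support values of \<open>K\<close> and \<open>-K\<close>. By Helly's theorem \<open>K\<close> contains a
  point \<open>z\<close> with \<open>z - K \<subseteq> d (K - z)\<close>, which controls the support value of \<open>-K\<close> by that of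
  \<open>K\<close>. Together they produce a translate of \<open>(d + 1)/2 (\<Sum>\<^sub>i \<tau>\<^sub>i) K\<close> whose support value
  dominates that of the union in every direction, so it contains the union.\<close>

lemma interval_cover_drop_lowest:
  fixes a b :: "'i \<Rightarrow> real"
  assumes fin: "finite I" and ne: "I \<noteq> {}"
    and ab: "\<forall>i\<in>insert j I. a i \<le> b i" and lowest: "\<forall>i\<in>I. b j \<le> b i"
    and cover: "{Min (a ` insert j I)..Max (b ` insert j I)} \<subseteq> (\<Union>i\<in>insert j I. {a i..b i})"
  shows "Max (b ` insert j I) = Max (b ` I)"
    and "Min (a ` I) \<le> b j"
    and "{Min (a ` I)..Max (b ` I)} \<subseteq> (\<Union>i\<in>I. {a i..b i})"
proof -
  show Max_eq: "Max (b ` insert j I) = Max (b ` I)"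
    using fin ne lowest by (auto simp: max_def intro: order.trans[OF _ Max_ge])
  have "Min (a ` I) \<in> a ` I" using fin ne by simp
  then obtain k where k: "k \<in> I" "a k = Min (a ` I)" by auto
  have Min_sub: "Min (a ` insert j I) \<le> Min (a ` I)"
    using fin ne by simp
  have a_ge: "Min (a ` insert j I) \<le> a i" if "i \<in> insert j I" for i
    using fin that by (intro Min_le) auto
  have b_le: "b i \<le> Max (b ` I)" if "i \<in> I" for i
    using fin that by simp
  show "Min (a ` I) \<le> b j"
  proof (rule ccontr)
    assume gap: "\<not> Min (a ` I) \<le> b j"
    define s where "s = (b j + Min (a ` I)) / 2"
    have "s \<in> {Min (a ` insert j I)..Max (b ` insert j I)}"
      using a_ge[of j] ab k b_le[of k] gap unfolding Max_eq s_def by auto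
    then have "s \<in> (\<Union>i\<in>insert j I. {a i..b i})" using cover by blast
    then obtain i where i: "i \<in> insert j I" "a i \<le> s" "s \<le> b i" by auto
    then have "i \<in> I" using gap s_def by auto
    then have "Min (a ` I) \<le> a i" using fin by simp
    then show False using i(2) gap s_def by argo
  qed
  show "{Min (a ` I)..Max (b ` I)} \<subseteq> (\<Union>i\<in>I. {a i..b i})"
  proof
    fix s assume s: "s \<in> {Min (a ` I)..Max (b ` I)}"
    then have "s \<in> {Min (a ` insert j I)..Max (b ` insert j I)}"
      using Min_sub unfolding Max_eq by simp
    then have "s \<in> (\<Union>i\<in>insert j I. {a i..b i})" using cover by blast
    then obtain i where i: "i \<in> insert j I" "a i \<le> s" "s \<le> b i" by auto
    show "s \<in> (\<Union>i\<in>I. {a i..b i})"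
    proof (cases "i = j")
      case True
      then show ?thesis using i k s lowest by (intro UN_I[of k]) auto
    next
      case False
      then show ?thesis using i by auto
    qed
  qed
qed

lemma interval_cover_bounds:
  fixes a b \<tau> :: "'i \<Rightarrow> real"
  assumes "finite I" "I \<noteq> {}" "0 \<le> w" "\<forall>i\<in>I. 0 \<le> \<tau> i"
    and "\<forall>i\<in>I. b i - a i = 2 * w * \<tau> i"
    and "{Min (a ` I)..Max (b ` I)} \<subseteq> (\<Union>i\<in>I. {a i..b i})"
  shows "Max (b ` I) - Min (a ` I) \<le> 2 * w * sum \<tau> I \<and>
    (\<Sum>i\<in>I. \<tau> i * (Max (b ` I) - b i)) \<le> w * ((sum \<tau> I)\<^sup>2 - (\<Sum>i\<in>I. (\<tau> i)\<^sup>2))"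
  using assms(1,2,4-)
  \<comment> \<open>Intervals are added in decreasing order of right endpoint, so the inserted one is lowest.\<close>
proof (induction I rule: finite_ranking_induct[where f = "\<lambda>i. - b i"])
  case empty
  then show ?case by simp
next
  case (insert j I)
  consider "I = {}" | "j \<in> I" | "I \<noteq> {}" "j \<notin> I" by blast
  then show ?case
  proof cases
    case 1
    then show ?thesis using insert.prems by (simp add: power2_eq_square)
  next
    case 2
    then show ?thesis using insert by (simp add: insert_absorb)
  next
    case 3
    have ab: "\<forall>i\<in>insert j I. a i \<le> b i"
      using insert.prems(2,3) assms(3) by (metis diff_ge_0_iff_ge mult_nonneg_nonneg zero_le_numeral)
    have lowest: "\<forall>i\<in>I. b j \<le> b i" using insert.hyps(2) by auto
    note drop = interval_cover_drop_lowest[OF insert.hyps(1) 3(1) ab lowest insert.prems(4)]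
    define M where "M = Max (b ` I)"
    define m' where "m' = Min (a ` I)"
    have IH: "M - m' \<le> 2 * w * sum \<tau> I"
      "(\<Sum>i\<in>I. \<tau> i * (M - b i)) \<le> w * ((sum \<tau> I)\<^sup>2 - (\<Sum>i\<in>I. (\<tau> i)\<^sup>2))"
      using insert.IH 3 insert.prems drop(3) unfolding M_def m'_def by auto
    have Min_insert: "Min (a ` insert j I) = min (a j) m'"
      using insert.hyps(1) 3(1) unfolding m'_def by simp
    have "M - b j \<le> 2 * w * sum \<tau> I" using IH(1) drop(2) unfolding m'_def by linarith
    then have "\<tau> j * (M - b j) \<le> \<tau> j * (2 * w * sum \<tau> I)"
      using insert.prems(2) by (simp add: mult_left_mono)
    moreover have "M - a j \<le> 2 * w * (\<tau> j + sum \<tau> I)"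
      using \<open>M - b j \<le> _\<close> insert.prems(3) by (simp add: algebra_simps)
    moreover have "0 \<le> w * \<tau> j" using assms(3) insert.prems(2) by simp
    ultimately show ?thesis
      using IH 3 insert.hyps(1) unfolding drop(1) Min_insert M_def[symmetric]
      by (simp add: power2_eq_square algebra_simps)
  qed
qed

lemma sum_power2_le_power2_sum:
  fixes f :: "'i \<Rightarrow> 'a::linordered_idom"
  assumes "finite I" "\<forall>i\<in>I. 0 \<le> f i"
  shows "(\<Sum>i\<in>I. (f i)\<^sup>2) \<le> (sum f I)\<^sup>2"
  using assms
proof (induction I rule: finite_induct)
  case (insert x I)
  then have "0 \<le> f x * sum f I" by (simp add: sum_nonneg)
  then show ?case using insert by (simp add: power2_eq_square algebra_simps)
qed simp

lemma non_separable_inner_image: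
  assumes "non_separable \<K>" "u \<noteq> 0"
  shows "inner u ` (convex hull (\<Union>\<K>)) \<subseteq> (\<Union>C\<in>\<K>. inner u ` C)"
proof
  fix s assume "s \<in> inner u ` (convex hull (\<Union>\<K>))"
  then obtain y where y: "y \<in> convex hull (\<Union>\<K>)" "inner u y = s" by blast
  have "hyperplane {x. inner u x = s}"
    using assms(2) unfolding hyperplane_def by blast
  then obtain C where "C \<in> \<K>" "{x. inner u x = s} \<inter> C \<noteq> {}"
    using assms(1) y unfolding non_separable_def by blast
  then show "s \<in> (\<Union>C\<in>\<K>. inner u ` C)" by blast
qed

lemma inner_convex_hull_contains_interval:
  assumes "y1 \<in> S" "y2 \<in> S"
  shows "{inner u y1..inner u y2} \<subseteq> inner u ` (convex hull S)"
proof -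
  have "{inner u y1..inner u y2} \<subseteq> closed_segment (inner u y1) (inner u y2)"
    by (simp add: closed_segment_eq_real_ivl)
  also have "\<dots> \<subseteq> convex hull (inner u ` S)"
    using assms by (simp add: segment_convex_hull hull_mono)
  also have "\<dots> = inner u ` (convex hull S)"
    by (simp add: convex_hull_linear_image bounded_linear.linear[OF bounded_linear_inner_right])
  finally show ?thesis .
qed

lemma inner_homothet_bounds:
  assumes "0 \<le> \<tau>" "kg \<in> K" "kh \<in> K"
    and "\<forall>k\<in>K. inner u kg \<le> inner u k \<and> inner u k \<le> inner u kh"
  shows "inner u ` homothet o' \<tau> K \<subseteq> {inner u (o' + \<tau> *\<^sub>R kg)..inner u (o' + \<tau> *\<^sub>R kh)}"
  using assms by (auto simp: homothet_def inner_add_right intro!: mult_left_mono)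

lemma non_separable_homothets_inner_bound:
  fixes K :: "'a::euclidean_space set" and \<tau> :: "nat \<Rightarrow> real"
  assumes \<tau>: "\<And>i. i < n \<Longrightarrow> 0 \<le> \<tau> i"
    and ns: "non_separable {homothet (o' i) (\<tau> i) K | i. i < n}" and "u \<noteq> 0"
    and extr: "kg \<in> K" "kh \<in> K" "\<forall>k\<in>K. inner u kg \<le> inner u k \<and> inner u k \<le> inner u kh"
    and x: "x \<in> (\<Union>i<n. homothet (o' i) (\<tau> i) K)"
  shows "(\<Sum>i<n. \<tau> i) * inner u x \<le> (\<Sum>i<n. \<tau> i * inner u (o' i))
    + (\<Sum>i<n. (\<tau> i)\<^sup>2) * (inner u kh + inner u kg) / 2
    + (\<Sum>i<n. \<tau> i)\<^sup>2 * (inner u kh - inner u kg) / 2"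
proof -
  define a where "a i = inner u (o' i + \<tau> i *\<^sub>R kg)" for i
  define b where "b i = inner u (o' i + \<tau> i *\<^sub>R kh)" for i
  define w where "w = (inner u kh - inner u kg) / 2"
  define M where "M = Max (b ` {..<n})"
  have fin: "finite {..<n}" "{..<n} \<noteq> {}" using x by auto
  have proj: "inner u ` homothet (o' i) (\<tau> i) K \<subseteq> {a i..b i}" if "i < n" for i
    unfolding a_def b_def using inner_homothet_bounds[OF \<tau>[OF that] extr] .
  have "Min (a ` {..<n}) \<in> a ` {..<n}" "M \<in> b ` {..<n}"
    using fin unfolding M_def by simp_all
  then obtain i1 i2 where i1: "i1 < n" "a i1 = Min (a ` {..<n})" and i2: "i2 < n" "b i2 = M"
    by (metis imageE lessThan_iff)
  have "o' i1 + \<tau> i1 *\<^sub>R kg \<in> \<Union>{homothet (o' i) (\<tau> i) K | i. i < n}"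
    "o' i2 + \<tau> i2 *\<^sub>R kh \<in> \<Union>{homothet (o' i) (\<tau> i) K | i. i < n}"
    unfolding homothet_def using i1(1) i2(1) extr(1,2) by blast+
  from inner_convex_hull_contains_interval[OF this]
  have "{Min (a ` {..<n})..M}
      \<subseteq> inner u ` (convex hull (\<Union>{homothet (o' i) (\<tau> i) K | i. i < n}))"
    unfolding i1(2)[symmetric] i2(2)[symmetric] a_def b_def .
  also have "\<dots> \<subseteq> (\<Union>C\<in>{homothet (o' i) (\<tau> i) K | i. i < n}. inner u ` C)"
    using non_separable_inner_image[OF ns \<open>u \<noteq> 0\<close>] .
  also have "\<dots> \<subseteq> (\<Union>i<n. {a i..b i})" using proj by blast
  finally have cover: "{Min (a ` {..<n})..M} \<subseteq> (\<Union>i<n. {a i..b i})" .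
  have "0 \<le> w" using extr unfolding w_def by auto
  moreover have "\<forall>i\<in>{..<n}. 0 \<le> \<tau> i" using \<tau> by simp
  moreover have "\<forall>i\<in>{..<n}. b i - a i = 2 * w * \<tau> i"
    unfolding a_def b_def w_def by (simp add: inner_add_right algebra_simps)
  ultimately have slack:
      "(\<Sum>i<n. \<tau> i * (M - b i)) \<le> w * ((\<Sum>i<n. \<tau> i)\<^sup>2 - (\<Sum>i<n. (\<tau> i)\<^sup>2))"
    using interval_cover_bounds[OF fin] cover unfolding M_def by blast
  obtain i where i: "i < n" "x \<in> homothet (o' i) (\<tau> i) K" using x by blast
  then have "inner u x \<le> b i" using proj by fastforce
  also have "b i \<le> M" unfolding M_def using i(1) by simp
  finally have "(\<Sum>i<n. \<tau> i) * inner u x \<le> (\<Sum>i<n. \<tau> i * M)"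
    unfolding sum_distrib_right using \<tau> by (intro sum_mono mult_left_mono) auto
  also have "\<dots> = (\<Sum>i<n. \<tau> i * b i) + (\<Sum>i<n. \<tau> i * (M - b i))"
    by (simp add: sum.distrib[symmetric] algebra_simps)
  also have "(\<Sum>i<n. \<tau> i * b i)
      = (\<Sum>i<n. \<tau> i * inner u (o' i)) + (\<Sum>i<n. (\<tau> i)\<^sup>2 * inner u kh)"
    unfolding b_def by (simp add: inner_add_right sum.distrib power2_eq_square algebra_simps)
  also have "(\<Sum>i<n. (\<tau> i)\<^sup>2 * inner u kh) = (\<Sum>i<n. (\<tau> i)\<^sup>2) * inner u kh"
    by (simp add: sum_distrib_right)
  finally show ?thesis
    using slack unfolding w_def by (simp add: algebra_simps) argo
qed

lemma centroid_mem_homothet: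
  fixes f :: "nat \<Rightarrow> 'a::real_vector"
  assumes "convex K" "\<forall>i\<le>N. f i \<in> K" "0 < N" "j \<le> N"
  shows "(1 / (N + 1)) *\<^sub>R (\<Sum>i\<le>N. f i) \<in> homothet ((1 / (N + 1)) *\<^sub>R f j) (N / (N + 1)) K"
proof -
  define y where "y = (\<Sum>i\<in>{..N} - {j}. (1 / N) *\<^sub>R f i)"
  have "card ({..N} - {j}) = N" using assms(4) by simp
  then have "y \<in> K"
    unfolding y_def using assms(1-3) by (intro convex_sum) auto
  moreover have "(\<Sum>i\<le>N. f i) = f j + N *\<^sub>R y"
    unfolding y_def using assms(3,4) by (simp add: sum.remove scaleR_sum_right)
  ultimately show ?thesis
    unfolding homothet_def by (intro image_eqI[of _ _ y]) (simp_all add: scaleR_add_right)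
qed

lemma exists_Minkowski_centre:
  fixes K :: "'a::euclidean_space set"
  assumes "compact K" "convex K" "K \<noteq> {}"
  shows "\<exists>z\<in>K. \<forall>x\<in>K. \<exists>y\<in>K. (real DIM('a) + 1) *\<^sub>R z = x + real DIM('a) *\<^sub>R y"
proof -
  define d where "d = DIM('a)"
  define S where "S x = homothet ((1 / (real d + 1)) *\<^sub>R x) (real d / (real d + 1)) K" for x
  have S_sub: "S x \<subseteq> K" if "x \<in> K" for x
  proof -
    have "(1 / (real d + 1)) *\<^sub>R x + (real d / (real d + 1)) *\<^sub>R y \<in> K" if "y \<in> K" for y
      by (rule convexD[OF assms(2) \<open>x \<in> K\<close> that]) (simp_all add: add_divide_distrib[symmetric])
    then show ?thesis unfolding S_def homothet_def by auto
  qed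
  have S_closed: "closed (S x)" for x
    unfolding S_def homothet_def
    by (intro compact_imp_closed compact_continuous_image assms(1) continuous_intros)
  have S_convex: "convex (S x)" for x
    unfolding S_def homothet_def using convex_affinity[OF assms(2)] .
  have meet_small: "K \<inter> \<Inter>(S ` X) \<noteq> {}" if "finite X" "X \<subseteq> K" "card X \<le> d + 1" for X
  proof -
    obtain k0 where "k0 \<in> K" using assms(3) by blast
    obtain h where h: "bij_betw h {0..<card X} X" using ex_bij_betw_nat_finite[OF \<open>finite X\<close>] by blast
    define f where "f i = (if i < card X then h i else k0)" for i
    have fK: "\<forall>i\<le>d. f i \<in> K"
      using h \<open>X \<subseteq> K\<close> \<open>k0 \<in> K\<close> by (auto simp: f_def bij_betw_def)
    have "0 < d" unfolding d_def by simp
    define z where "z = (1 / (real d + 1)) *\<^sub>R (\<Sum>i\<le>d. f i)"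
    have zS: "z \<in> S (f j)" if "j \<le> d" for j
      unfolding z_def S_def using centroid_mem_homothet[OF assms(2) fK \<open>0 < d\<close> that] .
    have "X = h ` {0..<card X}"
      using h by (simp add: bij_betw_def)
    also have "\<dots> = f ` {0..<card X}"
      by (intro image_cong) (auto simp: f_def)
    also have "\<dots> \<subseteq> f ` {..d}"
      using \<open>card X \<le> d + 1\<close> by (intro image_mono) auto
    finally have "X \<subseteq> f ` {..d}" .
    then have "z \<in> \<Inter>(S ` X)" using zS by auto
    moreover have "z \<in> K" using zS[of 0] S_sub fK by auto
    ultimately show ?thesis by blast
  qed
  have "K \<inter> (\<Inter>x\<in>K. S x) \<noteq> {}"
  proof (rule compact_imp_fip_image[OF assms(1) S_closed])
    fix X assume X: "finite X" "X \<subseteq> K"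
    have meet_small': "K \<inter> \<Inter>t \<noteq> {}" if t: "t \<subseteq> S ` X" "card t \<le> d + 1" for t
    proof -
      obtain Y where Y: "Y \<subseteq> X" "inj_on S Y" "t = S ` Y"
        using t(1) by (auto simp: subset_image_inj)
      have "finite Y" "Y \<subseteq> K" using Y(1) X finite_subset by auto
      moreover have "card Y \<le> d + 1" using Y t(2) by (simp add: card_image)
      ultimately show ?thesis using meet_small Y(3) by blast
    qed
    show "K \<inter> \<Inter>(S ` X) \<noteq> {}"
    proof (cases "card (S ` X) \<le> d + 1")
      case True
      then show ?thesis using meet_small' by blast
    next
      case False
      have "\<Inter>(S ` X) \<noteq> {}"
      proof (rule Helly)
        show "DIM('a) + 1 \<le> card (S ` X)" using False unfolding d_def by simp
        show "\<forall>s\<in>S ` X. convex s" using S_convex by blast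
      next
        fix t assume "t \<subseteq> S ` X" "card t = DIM('a) + 1"
        then show "\<Inter>t \<noteq> {}" using meet_small'[of t] unfolding d_def by auto
      qed
      moreover obtain x where "x \<in> X" using False by fastforce
      then have "\<Inter>(S ` X) \<subseteq> K" using S_sub X(2) by blast
      ultimately show ?thesis by blast
    qed
  qed
  then obtain z where "z \<in> K" and z: "\<forall>x\<in>K. z \<in> S x" by blast
  have "\<exists>y\<in>K. (real d + 1) *\<^sub>R z = x + real d *\<^sub>R y" if x: "x \<in> K" for x
  proof -
    obtain y where "y \<in> K" "z = (1 / (real d + 1)) *\<^sub>R x + (real d / (real d + 1)) *\<^sub>R y"
      using z x unfolding S_def homothet_def by auto
    then have "(real d + 1) *\<^sub>R z = x + real d *\<^sub>R y"
      by (simp add: scaleR_add_right)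
    then show ?thesis using \<open>y \<in> K\<close> by blast
  qed
  then show ?thesis using \<open>z \<in> K\<close> unfolding d_def by blast
qed

lemma mem_homothet_if_inner_le:
  fixes K :: "'a::euclidean_space set"
  assumes "closed K" "convex K" "K \<noteq> {}" "0 < r"
    and supp: "\<And>u. u \<noteq> 0 \<Longrightarrow> \<exists>k\<in>K. inner u x \<le> inner u t + r * inner u k"
  shows "x \<in> homothet t r K"
proof -
  define k where "k = (1 / r) *\<^sub>R (x - t)"
  have x: "x = t + r *\<^sub>R k" unfolding k_def using assms(4) by simp
  have "k \<in> K"
  proof (rule ccontr)
    assume "k \<notin> K"
    then obtain a b where sep: "inner a k < b" "\<forall>y\<in>K. b < inner a y"
      using separating_hyperplane_closed_point[OF assms(2,1)] by blast
    then have "- a \<noteq> 0" using assms(3) by fastforce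
    then obtain k' where "k' \<in> K" "inner (- a) x \<le> inner (- a) t + r * inner (- a) k'"
      using supp by blast
    then have "r * inner a k' \<le> r * inner a k" by (simp add: x inner_add_right)
    then show False using sep \<open>k' \<in> K\<close> assms(4) by force
  qed
  then show ?thesis unfolding homothet_def x by blast
qed

lemma centre_shift_inequality:
  fixes T Q d X C v g h :: real
  assumes "0 < T" "0 \<le> Q" "Q \<le> T\<^sup>2" "1 \<le> d"
    and "T * X \<le> T * C + Q * (h + g) / 2 + T\<^sup>2 * (h - g) / 2"
    and "(d + 1) * v \<le> g + d * h" "v \<le> h"
  shows "X \<le> C - ((d + 1) / 2 * T - Q / T) * v + (d + 1) / 2 * T * h"
proof -
  have "0 \<le> Q * ((d - 1) * (h - v))" using assms(2,4,7) by simp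
  moreover have "Q * (g + d * h - (d + 1) * v) \<le> T\<^sup>2 * (g + d * h - (d + 1) * v)"
    using assms(3,6) by (intro mult_right_mono) auto
  ultimately have "T * X \<le> T * C - ((d + 1) / 2 * T\<^sup>2 - Q) * v + (d + 1) / 2 * T\<^sup>2 * h"
    using assms(5) unfolding power2_eq_square by (simp add: algebra_simps) argo
  also have "\<dots> = T * (C - ((d + 1) / 2 * T - Q / T) * v + (d + 1) / 2 * T * h)"
    using assms(1) by (simp add: field_simps power2_eq_square)
  finally show ?thesis using assms(1) by simp
qed

lemma compact_inner_extremal_points:
  fixes K :: "'a::real_inner set"
  assumes "compact K" "K \<noteq> {}"
  obtains kg kh where "kg \<in> K" "kh \<in> K"
    "\<forall>k\<in>K. inner u kg \<le> inner u k \<and> inner u k \<le> inner u kh"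
proof -
  have "continuous_on K (inner u)" by (intro continuous_intros)
  then show ?thesis
    using continuous_attains_inf[OF assms] continuous_attains_sup[OF assms] that by metis
qed

lemma non_separable_homothets_inner_le_translate:
  fixes K :: "'a::euclidean_space set" and \<tau> :: "nat \<Rightarrow> real" and n :: nat
  defines "d \<equiv> real DIM('a)" and "T \<equiv> \<Sum>i<n. \<tau> i" and "Q \<equiv> \<Sum>i<n. (\<tau> i)\<^sup>2"
  assumes \<tau>: "\<And>i. i < n \<Longrightarrow> 0 < \<tau> i"
    and ns: "non_separable {homothet (o' i) (\<tau> i) K | i. i < n}" and "u \<noteq> 0"
    and extr: "kg \<in> K" "kh \<in> K" "\<forall>k\<in>K. inner u kg \<le> inner u k \<and> inner u k \<le> inner u kh"
    and z: "z \<in> K" "\<forall>x\<in>K. \<exists>y\<in>K. (d + 1) *\<^sub>R z = x + d *\<^sub>R y"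
    and x: "x \<in> (\<Union>i<n. homothet (o' i) (\<tau> i) K)"
  shows "inner u x \<le> inner u ((1 / T) *\<^sub>R (\<Sum>i<n. \<tau> i *\<^sub>R o' i)
      - ((d + 1) / 2 * T - Q / T) *\<^sub>R z) + (d + 1) / 2 * T * inner u kh"
proof -
  have "0 < T" unfolding T_def using x \<tau> by (intro sum_pos) auto
  have "0 \<le> Q" "Q \<le> T\<^sup>2"
    unfolding Q_def T_def using \<tau> by (auto intro: sum_nonneg sum_power2_le_power2_sum less_imp_le)
  obtain y where "y \<in> K" "(d + 1) *\<^sub>R z = kg + d *\<^sub>R y"
    using z extr(1) by blast
  then have "(d + 1) * inner u z \<le> inner u kg + d * inner u kh"
    using extr
    by (auto simp: d_def inner_add_right intro!: mult_left_mono dest!: arg_cong[where f = "inner u"])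
  moreover have "T * inner u x \<le> T * inner u ((1 / T) *\<^sub>R (\<Sum>i<n. \<tau> i *\<^sub>R o' i))
      + Q * (inner u kh + inner u kg) / 2 + T\<^sup>2 * (inner u kh - inner u kg) / 2"
    using non_separable_homothets_inner_bound[OF _ ns \<open>u \<noteq> 0\<close> extr x] \<tau> \<open>0 < T\<close>
    unfolding T_def Q_def by (simp add: inner_sum_right less_imp_le)
  ultimately show ?thesis
    using centre_shift_inequality[OF \<open>0 < T\<close> \<open>0 \<le> Q\<close> \<open>Q \<le> T\<^sup>2\<close>] extr z(1)
    unfolding d_def by (simp add: inner_diff_right)
qed

theorem corollary6:
  fixes K :: "'a::euclidean_space set"
    and o' :: "nat \<Rightarrow> 'a" and \<tau> :: "nat \<Rightarrow> real" and n :: nat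
  assumes "convex_body K"
    and "\<And>i. i < n \<Longrightarrow> \<tau> i > 0"
    and "non_separable {homothet (o' i) (\<tau> i) K | i. i < n}"
  shows "\<exists>t. (\<Union>i<n. homothet (o' i) (\<tau> i) K)
              \<subseteq> homothet t ((real DIM('a) + 1) / 2 * (\<Sum>i<n. \<tau> i)) K"
proof (cases "n = 0")
  case True
  then show ?thesis by simp
next
  case False
  have K: "compact K" "convex K" "K \<noteq> {}"
    using assms(1) interior_subset unfolding convex_body_def by auto
  obtain z where z: "z \<in> K"
    "\<forall>x\<in>K. \<exists>y\<in>K. (real DIM('a) + 1) *\<^sub>R z = x + real DIM('a) *\<^sub>R y"
    using exists_Minkowski_centre[OF K] by blast
  define T where "T = (\<Sum>i<n. \<tau> i)"
  define t where "t = (1 / T) *\<^sub>R (\<Sum>i<n. \<tau> i *\<^sub>R o' i)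
    - ((real DIM('a) + 1) / 2 * T - (\<Sum>i<n. (\<tau> i)\<^sup>2) / T) *\<^sub>R z"
  have "x \<in> homothet t ((real DIM('a) + 1) / 2 * T) K"
    if x: "x \<in> (\<Union>i<n. homothet (o' i) (\<tau> i) K)" for x
  proof (rule mem_homothet_if_inner_le[OF compact_imp_closed[OF K(1)] K(2,3)])
    show "0 < (real DIM('a) + 1) / 2 * T"
      unfolding T_def using False assms(2) by (intro mult_pos_pos sum_pos) auto
    fix u :: 'a assume "u \<noteq> 0"
    obtain kg kh where extr: "kg \<in> K" "kh \<in> K"
      "\<forall>k\<in>K. inner u kg \<le> inner u k \<and> inner u k \<le> inner u kh"
      using compact_inner_extremal_points[OF K(1,3)] by blast
    show "\<exists>k\<in>K. inner u x \<le> inner u t + (real DIM('a) + 1) / 2 * T * inner u k"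
      using non_separable_homothets_inner_le_translate[OF assms(2,3) \<open>u \<noteq> 0\<close> extr z x] extr(2)
      unfolding t_def T_def by blast
  qed
  then show ?thesis unfolding T_def by blast
qed

end
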